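(* Let $N\ge 2$ be an integer, let $m_N=\min\{m\ge1: d(m)=N\}$, and write $m_N=p_1^{\alpha_1}\cdots p_r^{\alpha_r}$ with all $\alpha_i\ge1$. Then for every integer $k\ge 1$ and every $j\in\{1,\dots,r\}$: if $p_j>p_{r+1}^{1/2^k}$, then $\Omega(\alpha_j+1)\le k$.
   Context: $d(m)$ is the number of positive divisors of $m$. $p_j$ denotes the $j$-th smallest prime. $\Omega(n)$ denotes the number of prime factors of $n$ counted with multiplicity (the number of prime power divisors). The primes dividing $m_N$ are exactly $p_1,\dots,p_r$ (the exponents of $m_N$ are nonincreasing in the prime). *)

theory Defs
  imports Complex_Main "HOL-Library.Infinite_Set" "HOL-Computational_Algebra.Primes"
begin

definition ndivisors :: "nat \<Rightarrow> nat" where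
  "ndivisors m = card {d. d dvd m}"

text \<open>p_j: the j-th smallest prime, 1-indexed (p_1 = 2).\<close>
definition nth_prime :: "nat \<Rightarrow> nat" where
  "nth_prime j = enumerate {p. prime p} (j - 1)"

definition bigOmega :: "nat \<Rightarrow> nat" where
  "bigOmega n = size (prime_factorization n)"

definition mN :: "nat \<Rightarrow> nat" where
  "mN N = (LEAST m. m \<ge> 1 \<and> ndivisors m = N)"

end

theory Submission
  imports Defs
begin

text \<open>
  Let \<open>m = m\<^sub>N\<close> be the least number with exactly \<open>N\<close> divisors, \<open>r\<close> the number of its
  prime factors, \<open>p = p\<^sub>j\<close> and \<open>\<alpha>\<close> the exponent of \<open>p\<close> in \<open>m\<close>.  Suppose
  \<open>\<Omega>(\<alpha> + 1) > k\<close>.  Then \<open>\<alpha> + 1 = u v\<close> with \<open>u \<ge> 2^k\<close> and \<open>v \<ge> 2\<close>.  Among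
  \<open>p\<^sub>1, \<dots>, p\<^sub>r\<^sub>+\<^sub>1\<close> some prime \<open>q\<close> does not divide \<open>m\<close>, and \<open>q \<le> p\<^sub>r\<^sub>+\<^sub>1 < p^(2^k) \<le> p^u\<close>
  by the hypothesis on \<open>p\<close>.  Replacing the factor \<open>p^\<alpha> = p^(u-1) (p^u)^(v-1)\<close> of \<open>m\<close> by
  \<open>p^(u-1) q^(v-1)\<close> keeps the divisor count \<open>(\<alpha> + 1) \<cdot> \<dots> = u v \<cdot> \<dots>\<close> but makes the
  number smaller, contradicting minimality of \<open>m\<close>.

  The
  argument does not need the hypotheses \<open>k \<ge> 1\<close>, \<open>j \<ge> 1\<close> and \<open>j \<le> r\<close>.
\<close>

text \<open>The divisor function is multiplicative: divisors of \<open>a b\<close> for coprime \<open>a, b\<close>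
  correspond bijectively to pairs of divisors of \<open>a\<close> and of \<open>b\<close>.\<close>
lemma ndivisors_mult_coprime:
  fixes a b :: nat
  assumes "coprime a b"
  shows "ndivisors (a * b) = ndivisors a * ndivisors b"
proof -
  let ?D = "\<lambda>n::nat. {d. d dvd n}"
  have "bij_betw (\<lambda>(x, y). x * y) (?D a \<times> ?D b) (?D (a * b))"
  proof (rule bij_betwI')
    fix xy xy' assume "xy \<in> ?D a \<times> ?D b" "xy' \<in> ?D a \<times> ?D b"
    then obtain x y x' y' where pairs: "xy = (x, y)" "xy' = (x', y')"
      and dvd: "x dvd a" "y dvd b" "x' dvd a" "y' dvd b" by auto
    have coprime_a: "coprime a y" "coprime a y'" and coprime_b: "coprime b x" "coprime b x'"
      using dvd assms coprime_divisors[of a a] coprime_divisors[of b b]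
      by (auto simp: coprime_commute)
    show "((\<lambda>(x, y). x * y) xy = (\<lambda>(x, y). x * y) xy') = (xy = xy')"
    proof
      assume "(\<lambda>(x, y). x * y) xy = (\<lambda>(x, y). x * y) xy'"
      then have prod_eq: "x * y = x' * y'" using pairs by simp
      text \<open>Each factor is recovered as a gcd: \<open>x = gcd (x y) a\<close> and \<open>y = gcd (y x) b\<close>.\<close>
      have x_gcd: "x = gcd (x * y) a" "x' = gcd (x' * y') a"
        using gcd_mult_left_right_cancel[OF coprime_a(1), of x]
          gcd_mult_left_right_cancel[OF coprime_a(2), of x'] dvd
        by (simp_all add: gcd_nat.absorb1)
      have y_gcd: "y = gcd (y * x) b" "y' = gcd (y' * x') b"
        using gcd_mult_left_right_cancel[OF coprime_b(1), of y]
          gcd_mult_left_right_cancel[OF coprime_b(2), of y'] dvd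
        by (simp_all add: gcd_nat.absorb1)
      have "x = x'" using x_gcd prod_eq by simp
      have "y * x = y' * x'" using prod_eq by (simp add: mult.commute)
      then have "y = y'" using y_gcd by simp
      with \<open>x = x'\<close> show "xy = xy'" using pairs by simp
    qed simp
  next
    fix xy assume "xy \<in> ?D a \<times> ?D b"
    then show "(\<lambda>(x, y). x * y) xy \<in> ?D (a * b)" by (auto intro: mult_dvd_mono)
  next
    fix d assume "d \<in> ?D (a * b)"
    then obtain x y where "d = x * y" "x dvd a" "y dvd b" using division_decomp by blast
    then show "\<exists>xy \<in> ?D a \<times> ?D b. d = (\<lambda>(x, y). x * y) xy" by auto
  qed
  then have "card (?D a \<times> ?D b) = card (?D (a * b))" by (rule bij_betw_same_card)
  then show ?thesis unfolding ndivisors_def by (simp add: card_cartesian_product)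
qed

lemma ndivisors_prime_power:
  fixes p :: nat
  assumes "prime p"
  shows "ndivisors (p ^ e) = e + 1"
proof -
  have "{d. d dvd p ^ e} = (\<lambda>i. p ^ i) ` {..e}"
    using divides_primepow_nat[OF assms] by auto
  moreover have "inj_on (\<lambda>i. p ^ i) {..e}"
    using prime_gt_1_nat[OF assms] by (auto intro!: inj_onI simp: power_inject_exp)
  ultimately show ?thesis unfolding ndivisors_def by (simp add: card_image)
qed

lemma bigOmega_prime_mult:
  fixes p n :: nat
  assumes "prime p" "n \<noteq> 0"
  shows "bigOmega (p * n) = bigOmega n + 1"
  using prime_factorization_times_prime[OF assms(2,1)] unfolding bigOmega_def by simp

lemma two_power_bigOmega_le:
  fixes n :: nat
  assumes "n \<noteq> 0"
  shows "2 ^ bigOmega n \<le> n"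
  using assms
proof (induction n rule: less_induct)
  case (less n)
  show ?case
  proof (cases "n = 1")
    case True
    then show ?thesis by (simp add: bigOmega_def)
  next
    case False
    then obtain p where p: "prime p" "p dvd n" using prime_factor_nat by blast
    then obtain n' where n: "n = p * n'" by blast
    have "n' \<noteq> 0" "n' < n" using n less.prems prime_gt_1_nat[OF p(1)] by auto
    then have "2 ^ bigOmega n' \<le> n'" using less.IH by blast
    then have "2 * 2 ^ bigOmega n' \<le> p * n'" using prime_ge_2_nat[OF p(1)] by (simp add: mult_le_mono)
    then show ?thesis using n bigOmega_prime_mult[OF p(1) \<open>n' \<noteq> 0\<close>] by simp
  qed
qed

lemma bigOmega_gt_split:
  fixes n :: nat
  assumes "k < bigOmega n"
  obtains u v where "n = u * v" "2 ^ k \<le> u" "2 \<le> v"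
proof -
  have "n \<noteq> 0" using assms by (intro notI) (simp add: bigOmega_def)
  have "n \<noteq> 1" using assms by (intro notI) (simp add: bigOmega_def)
  then obtain p where p: "prime p" "p dvd n" using prime_factor_nat by blast
  from p(2) obtain u where n: "n = p * u" by (rule dvdE)
  have "u \<noteq> 0" using n \<open>n \<noteq> 0\<close> by auto
  have "k \<le> bigOmega u" using assms bigOmega_prime_mult[OF p(1) \<open>u \<noteq> 0\<close>] n by simp
  then have "2 ^ k \<le> (2::nat) ^ bigOmega u" by (rule power_increasing) simp
  also have "\<dots> \<le> u" by (rule two_power_bigOmega_le[OF \<open>u \<noteq> 0\<close>])
  finally show ?thesis using that[of u p] n prime_ge_2_nat[OF p(1)] by (simp add: mult.commute)
qed

lemma prime_nth_prime: "prime (nth_prime j)"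
  unfolding nth_prime_def using enumerate_in_set[OF primes_infinite] by auto

lemma nth_prime_strict_mono: "1 \<le> i \<Longrightarrow> i < j \<Longrightarrow> nth_prime i < nth_prime j"
  unfolding nth_prime_def using enumerate_mono[OF _ primes_infinite] by simp

lemma small_prime_not_dvd:
  fixes m :: nat
  assumes "m \<noteq> 0"
  obtains q where "prime q" "\<not> q dvd m" "q \<le> nth_prime (card (prime_factors m) + 1)"
proof -
  define r where "r = card (prime_factors m)"
  have "inj_on nth_prime {1..r + 1}"
  proof (rule inj_onI)
    fix a b assume "a \<in> {1..r + 1}" "b \<in> {1..r + 1}" "nth_prime a = nth_prime b"
    then show "a = b"
      using nth_prime_strict_mono[of a b] nth_prime_strict_mono[of b a]
      by (cases a b rule: linorder_cases) auto
  qed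
  then have card_primes: "card (nth_prime ` {1..r + 1}) = r + 1" by (simp add: card_image)
  have "\<not> nth_prime ` {1..r + 1} \<subseteq> prime_factors m"
  proof
    assume "nth_prime ` {1..r + 1} \<subseteq> prime_factors m"
    then have "card (nth_prime ` {1..r + 1}) \<le> r" unfolding r_def by (intro card_mono) auto
    then show False using card_primes by simp
  qed
  then obtain i where i: "i \<in> {1..r + 1}" "nth_prime i \<notin> prime_factors m" by blast
  have "\<not> nth_prime i dvd m" using i(2) prime_nth_prime assms by (auto simp: in_prime_factors_iff)
  moreover have "nth_prime i \<le> nth_prime (r + 1)"
    using i(1) nth_prime_strict_mono[of i "r + 1"] by (cases "i = r + 1") auto
  ultimately show ?thesis using that prime_nth_prime unfolding r_def by blast
qed

text \<open>For \<open>N \<ge> 1\<close> the minimum defining \<open>m\<^sub>N\<close> exists (\<open>2^(N-1)\<close> has \<open>N\<close> divisors),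
  so \<open>m\<^sub>N\<close> itself has \<open>N\<close> divisors.\<close>
lemma mN_spec:
  assumes "N \<ge> 1"
  shows "mN N \<ge> 1" "ndivisors (mN N) = N"
proof -
  have "2 ^ (N - 1) \<ge> (1::nat) \<and> ndivisors (2 ^ (N - 1)) = N"
    using ndivisors_prime_power[of 2 "N - 1"] assms by simp
  then have "mN N \<ge> 1 \<and> ndivisors (mN N) = N" unfolding mN_def by (rule LeastI)
  then show "mN N \<ge> 1" "ndivisors (mN N) = N" by auto
qed

lemma mN_least: "m \<ge> 1 \<Longrightarrow> ndivisors m = N \<Longrightarrow> mN N \<le> m"
  unfolding mN_def by (rule Least_le) simp

lemma exponent_exchange:
  fixes m p q u v :: nat
  assumes "m \<noteq> 0" "prime p" "prime q" "\<not> q dvd m"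
    and uv: "multiplicity p m + 1 = u * v" "2 \<le> v"
    and q_less: "q < p ^ u"
  obtains m' where "1 \<le> m'" "m' < m" "ndivisors m' = ndivisors m"
proof -
  define \<alpha> where "\<alpha> = multiplicity p m"
  obtain m1 where m: "m = p ^ \<alpha> * m1" and "\<not> p dvd m1"
    using multiplicity_decompose'[OF assms(1)] not_prime_unit assms(2) unfolding \<alpha>_def by blast
  have "m1 \<noteq> 0" using m \<open>m \<noteq> 0\<close> by auto
  have \<alpha>_uv: "\<alpha> + 1 = u * v" using uv(1) unfolding \<alpha>_def .
  have "u \<ge> 1" using \<alpha>_uv by (cases u) auto
  have "u * v = u + u * (v - 1)" using uv(2) by (cases v) auto
  then have \<alpha>: "\<alpha> = (u - 1) + u * (v - 1)" and "\<alpha> \<ge> 1"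
    using \<alpha>_uv \<open>u \<ge> 1\<close> uv(2) mult_le_mono[of 1 u 1 "v - 1"] by linarith+
  have "p dvd m" unfolding m using \<open>\<alpha> \<ge> 1\<close> by (intro dvd_mult2 dvd_power) auto
  then have "p \<noteq> q" using \<open>\<not> q dvd m\<close> by auto
  have "\<not> q dvd m1" using \<open>\<not> q dvd m\<close> m by auto
  then have coprime: "coprime m1 p" "coprime m1 q" "coprime p q"
    using \<open>\<not> p dvd m1\<close> prime_imp_coprime[OF assms(2)] prime_imp_coprime[OF assms(3)]
      primes_coprime[OF assms(2,3) \<open>p \<noteq> q\<close>] by (auto simp: coprime_commute)
  have "ndivisors m = ndivisors (p ^ \<alpha>) * ndivisors m1"
    unfolding m using coprime(1) by (simp add: ndivisors_mult_coprime coprime_commute)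
  then have nd_m: "ndivisors m = (u * v) * ndivisors m1"
    by (simp only: ndivisors_prime_power[OF assms(2)] \<alpha>_uv)
  define m' where "m' = m1 * p ^ (u - 1) * q ^ (v - 1)"
  have "ndivisors m' = ndivisors m1 * ndivisors (p ^ (u - 1)) * ndivisors (q ^ (v - 1))"
    unfolding m'_def using coprime by (simp add: ndivisors_mult_coprime)
  then have "ndivisors m' = ndivisors m"
    using nd_m \<open>u \<ge> 1\<close> uv(2) by (simp add: ndivisors_prime_power assms(2,3))
  have "q ^ (v - 1) < (p ^ u) ^ (v - 1)" using q_less uv(2) by (intro power_strict_mono) auto
  then have "p ^ (u - 1) * q ^ (v - 1) < p ^ \<alpha>"
    using prime_gt_0_nat[OF assms(2)] by (simp add: \<alpha> power_add power_mult)
  then have "m' < m" using \<open>m1 \<noteq> 0\<close> unfolding m'_def m by simp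
  moreover have "1 \<le> m'"
    using \<open>m1 \<noteq> 0\<close> prime_gt_0_nat[OF assms(2)] prime_gt_0_nat[OF assms(3)] by (simp add: m'_def)
  ultimately show ?thesis using that \<open>ndivisors m' = ndivisors m\<close> by blast
qed

lemma less_power_of_root_less:
  fixes p q n :: nat
  assumes "n > 0" "real p > real q powr (1 / real n)"
  shows "q < p ^ n"
proof (cases "q = 0")
  case True
  then show ?thesis using assms by simp
next
  case False
  have "real q = (real q powr (1 / real n)) ^ n"
    using False assms(1) by (simp add: powr_power)
  also have "\<dots> < real p ^ n" using assms by (intro power_strict_mono) auto
  also have "\<dots> = real (p ^ n)" by simp
  finally show ?thesis by (simp only: of_nat_less_iff)
qed

theorem lemma2p2:
  fixes N k j :: nat
  assumes "N \<ge> 2" and "k \<ge> 1"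
    and "1 \<le> j" and "j \<le> card (prime_factors (mN N))"
    and "real (nth_prime j) >
         real (nth_prime (card (prime_factors (mN N)) + 1)) powr (1 / 2 ^ k)"
  shows "bigOmega (multiplicity (nth_prime j) (mN N) + 1) \<le> k"
proof (rule ccontr)
  define m where "m = mN N"
  define p where "p = nth_prime j"
  assume "\<not> ?thesis"
  then have "k < bigOmega (multiplicity p m + 1)" unfolding m_def p_def by simp
  then obtain u v where uv: "multiplicity p m + 1 = u * v" "2 ^ k \<le> u" "2 \<le> v"
    by (rule bigOmega_gt_split)
  have m: "m \<noteq> 0" "ndivisors m = N" using mN_spec[of N] assms(1) unfolding m_def by auto
  have p: "prime p" unfolding p_def by (rule prime_nth_prime)
  obtain q where q: "prime q" "\<not> q dvd m" "q \<le> nth_prime (card (prime_factors m) + 1)"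
    using small_prime_not_dvd[OF m(1)] by blast
  have "real (nth_prime (card (prime_factors m) + 1)) powr (1 / real (2 ^ k)) < real p"
    using assms(5) unfolding m_def p_def by simp
  then have "nth_prime (card (prime_factors m) + 1) < p ^ 2 ^ k"
    by (rule less_power_of_root_less[rotated]) simp
  with q(3) have "q < p ^ 2 ^ k" by (rule le_less_trans)
  also have "\<dots> \<le> p ^ u" using uv(2) prime_gt_0_nat[OF p] by (intro power_increasing) auto
  finally obtain m' where "1 \<le> m'" "m' < m" "ndivisors m' = ndivisors m"
    using exponent_exchange[OF m(1) p q(1,2) uv(1,3)] by blast
  then show False using mN_least[of m' N] m(2) unfolding m_def by simp
qed

end
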